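(* Assume the setting in the context, with $0<\lambda<\eta<1$. Then $\lim_{k\to\infty}\|\nabla f(\theta_k)\|=0$.
   Context: Let $g:\mathbb{R}^n\to\mathbb{R}$, $h:\mathbb{R}^n\times\mathbb{R}^d\to\mathbb{R}$ satisfy: (A1) $h$ is twice differentiable in $x$, for each $\theta$ there are $0<\mu(\theta)\le L(\theta)$ with $\mu(\theta)I\preceq\nabla_x^2h(x,\theta)\preceq L(\theta)I$ for all $x$, and $\nabla_xh,\nabla^2_xh$ are continuous in $\theta$; (A2) $\nabla_x^2h$ is $L_H$-Lipschitz in $x$ and $\nabla^2_{x\theta}h$ is $L_J$-Lipschitz in $x$, uniformly in $\theta$. Let $\hat{x}(\theta)=\arg\min_xh(x,\theta)$, $f(\theta)=g(\hat{x}(\theta))$. (B) $f$ is continuously differentiable with $L_{\nabla f}$-Lipschitz gradient, $g$ continuously differentiable with $L_{\nabla g}$-Lipschitz gradient, $L_{\nabla f},L_{\nabla g}>0$, $g$ bounded below. Fix $\beta_0>0$, $0<\underline{\rho}<1<\overline{\rho}$, $\lambda<\eta$. Consider sequences $\theta_k\in\mathbb{R}^d$, $z_k\in\mathbb{R}^d\setminus\{0\}$, $\epsilon_k\ge0$, $\tilde{x}_k\in\mathbb{R}^n$ with $\|\tilde{x}_k-\hat{x}(\theta_k)\|\le\epsilon_k$, $\alpha_k,\beta_k>0$, with $\theta_{k+1}=\theta_k-\alpha_kz_k$ and $\|z_k-\nabla f(\theta_k)\|\le(1-\eta)\|z_k\|$ for all $k$. Set $w_k=\|\nabla g(\tilde{x}_k)\|+\|\nabla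 g(\tilde{x}_{k+1})\|$, $\bar{\epsilon}_k=\max\{\epsilon_k,\epsilon_{k+1}\}$, $\hat{s}_k=\sqrt{(\eta-\lambda)^2-4L_{\nabla f}(w_k\bar{\epsilon}_k+L_{\nabla g}\bar{\epsilon}_k^2)/\|z_k\|^2}$ (assumed real), $\underline{\alpha}_k=(\eta-\lambda-\hat{s}_k)/L_{\nabla f}$, $\overline{\alpha}_k=(\eta-\lambda+\hat{s}_k)/L_{\nabla f}$. Assume for every $k$: $\alpha_k=\underline{\rho}^{i_k}\beta_k$ where $i_k$ is the smallest nonnegative integer with $\underline{\rho}^{i_k}\beta_k\in[\underline{\alpha}_k,\overline{\alpha}_k]$; if $i_k>0$ then $\alpha_k>\underline{\rho}\,\overline{\alpha}_k$; and $\beta_{k+1}=\overline{\rho}\alpha_k$. *)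

theory Defs
  imports "HOL-Analysis.Analysis"
begin

definition xhat :: "(real^'n \<Rightarrow> real^'d \<Rightarrow> real) \<Rightarrow> real^'d \<Rightarrow> real^'n" where
  "xhat h \<theta> = (ARG_MIN (\<lambda>x. h x \<theta>) x. True)"

definition shat_rad :: "real \<Rightarrow> real \<Rightarrow> real \<Rightarrow> real \<Rightarrow> real \<Rightarrow> real \<Rightarrow> real \<Rightarrow> real" where
  "shat_rad \<eta> lam Lf Lg w eb zn = (\<eta> - lam)^2 - 4 * Lf * (w * eb + Lg * eb^2) / zn^2"

definition shat :: "real \<Rightarrow> real \<Rightarrow> real \<Rightarrow> real \<Rightarrow> real \<Rightarrow> real \<Rightarrow> real \<Rightarrow> real" where
  "shat \<eta> lam Lf Lg w eb zn = sqrt (shat_rad \<eta> lam Lf Lg w eb zn)"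

definition alpha_low :: "real \<Rightarrow> real \<Rightarrow> real \<Rightarrow> real \<Rightarrow> real \<Rightarrow> real \<Rightarrow> real \<Rightarrow> real" where
  "alpha_low \<eta> lam Lf Lg w eb zn = (\<eta> - lam - shat \<eta> lam Lf Lg w eb zn) / Lf"

definition alpha_up :: "real \<Rightarrow> real \<Rightarrow> real \<Rightarrow> real \<Rightarrow> real \<Rightarrow> real \<Rightarrow> real \<Rightarrow> real" where
  "alpha_up \<eta> lam Lf Lg w eb zn = (\<eta> - lam + shat \<eta> lam Lf Lg w eb zn) / Lf"

end

theory Submission
  imports Defs
begin

text \<open>
  With an \<open>L\<close>-Lipschitz gradient, \<open>f\<close> lies below its quadratic model, and a direction
  \<open>z\<close> with \<open>\<parallel>z - \<nabla>f\<parallel> \<le> (1 - \<eta>)\<parallel>z\<parallel>\<close> satisfies \<open>\<nabla>f \<bullet> z \<ge> \<eta>\<parallel>z\<parallel>\<^sup>2\<close>; hence every step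
  \<open>\<alpha> \<le> 2(\<eta> - \<lambda>)/L\<close> decreases \<open>f\<close> by at least \<open>\<lambda>\<alpha>\<parallel>z\<parallel>\<^sup>2\<close>. The inexactness of \<open>x\<^sub>k\<close> only
  shrinks the interval \<open>[\<alpha>\<^sub>l\<^sub>o, \<alpha>\<^sub>u\<^sub>p]\<close> towards its midpoint \<open>(\<eta> - \<lambda>)/L\<close>, so accepted steps
  stay below \<open>2(\<eta> - \<lambda>)/L\<close>; they also stay above \<open>min \<beta>\<^sub>0 (\<rho>(\<eta> - \<lambda>)/L)\<close>, because a
  backtracked step exceeds \<open>\<rho>\<alpha>\<^sub>u\<^sub>p\<close> and an unreduced one is \<open>\<rho>\<^sub>h\<alpha>\<^sub>k\<^sub>-\<^sub>1 \<ge> \<alpha>\<^sub>k\<^sub>-\<^sub>1\<close>.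
  Telescoping against the lower bound of \<open>g\<close> makes \<open>\<Sum>\<parallel>z\<^sub>k\<parallel>\<^sup>2\<close> finite, and \<open>\<parallel>\<nabla>f\<parallel> \<le> 2\<parallel>z\<parallel>\<close>.
\<close>

lemma Lipschitz_gradient_quadratic_upper_bound:
  fixes F :: "'a::real_inner \<Rightarrow> real"
  assumes deriv: "\<And>p. (F has_derivative (\<lambda>u. G p \<bullet> u)) (at p)"
    and Lipschitz: "\<And>a b. norm (G a - G b) \<le> L * norm (a - b)"
  shows "F y \<le> F x + G x \<bullet> (y - x) + L / 2 * (norm (y - x))\<^sup>2"
proof -
  define d where "d = y - x"
  define \<psi> where "\<psi> t = F (x + t *\<^sub>R d) - t * (G x \<bullet> d) - L / 2 * t\<^sup>2 * (norm d)\<^sup>2" for t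
  have \<psi>_deriv: "(\<psi> has_real_derivative (G (x + t *\<^sub>R d) - G x) \<bullet> d - L * t * (norm d)\<^sup>2) (at t)"
    for t
  proof -
    have "((\<lambda>t. x + t *\<^sub>R d) has_derivative (\<lambda>s. s *\<^sub>R d)) (at t)"
      by (auto intro!: derivative_eq_intros)
    from has_derivative_compose[OF this deriv]
    have "((\<lambda>t. F (x + t *\<^sub>R d)) has_real_derivative G (x + t *\<^sub>R d) \<bullet> d) (at t)"
      by (simp add: has_field_derivative_def mult_commute_abs)
    then show ?thesis
      unfolding \<psi>_def by (auto intro!: derivative_eq_intros simp: inner_diff_left)
  qed
  have "\<psi> 1 \<le> \<psi> 0"
  proof (rule DERIV_nonpos_imp_nonincreasing[of 0 1 \<psi>])
    fix t :: real
    assume t: "0 \<le> t" "t \<le> 1"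
    have "(G (x + t *\<^sub>R d) - G x) \<bullet> d \<le> norm (G (x + t *\<^sub>R d) - G x) * norm d"
      by (rule norm_cauchy_schwarz)
    also have "\<dots> \<le> L * t * (norm d)\<^sup>2"
      using mult_right_mono[OF Lipschitz[of "x + t *\<^sub>R d" x] norm_ge_zero[of d]] t
      by (simp add: power2_eq_square mult.assoc)
    finally show "\<exists>y. (\<psi> has_real_derivative y) (at t) \<and> y \<le> 0"
      using \<psi>_deriv[of t] by force
  qed simp
  then show ?thesis
    unfolding \<psi>_def d_def by simp
qed

lemma relative_error_inner_lower_bound:
  fixes v z :: "'a::real_inner"
  assumes "norm (z - v) \<le> (1 - \<eta>) * norm z"
  shows "\<eta> * (norm z)\<^sup>2 \<le> v \<bullet> z"
proof -
  have "(norm z)\<^sup>2 - v \<bullet> z = (z - v) \<bullet> z"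
    by (simp add: inner_diff_left power2_norm_eq_inner)
  also have "\<dots> \<le> norm (z - v) * norm z"
    by (rule norm_cauchy_schwarz)
  also have "\<dots> \<le> (1 - \<eta>) * (norm z)\<^sup>2"
    using mult_right_mono[OF assms norm_ge_zero[of z]] by (simp add: power2_eq_square mult.assoc)
  finally show ?thesis
    by (simp add: algebra_simps)
qed

lemma relative_error_norm_upper_bound:
  fixes v z :: "'a::real_normed_vector"
  assumes "norm (z - v) \<le> (1 - \<eta>) * norm z" "0 \<le> \<eta>"
  shows "norm v \<le> 2 * norm z"
proof -
  have "norm v \<le> norm z + norm (z - v)"
    using norm_triangle_ineq4[of z "z - v"] by simp
  moreover have "(1 - \<eta>) * norm z \<le> norm z"
    using mult_right_mono[of "1 - \<eta>" 1 "norm z"] assms(2) by simp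
  ultimately show ?thesis
    using assms(1) by linarith
qed

lemma gradient_step_sufficient_decrease:
  fixes F :: "'a::real_inner \<Rightarrow> real"
  assumes deriv: "\<And>p. (F has_derivative (\<lambda>u. G p \<bullet> u)) (at p)"
    and Lipschitz: "\<And>a b. norm (G a - G b) \<le> L * norm (a - b)"
    and "0 < L" "0 \<le> \<alpha>" "\<alpha> \<le> 2 * (\<eta> - lam) / L"
    and descent_dir: "\<eta> * (norm z)\<^sup>2 \<le> G x \<bullet> z"
  shows "F (x - \<alpha> *\<^sub>R z) \<le> F x - lam * \<alpha> * (norm z)\<^sup>2"
proof -
  have "F (x - \<alpha> *\<^sub>R z) \<le> F x - \<alpha> * (G x \<bullet> z) + L / 2 * \<alpha>\<^sup>2 * (norm z)\<^sup>2"
    using Lipschitz_gradient_quadratic_upper_bound[OF deriv Lipschitz, of "x - \<alpha> *\<^sub>R z" x] \<open>0 \<le> \<alpha>\<close>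
    by (simp add: power_mult_distrib)
  also have "\<dots> \<le> F x - \<alpha> * (\<eta> * (norm z)\<^sup>2) + L / 2 * \<alpha> * (\<alpha> * (norm z)\<^sup>2)"
    using mult_left_mono[OF descent_dir \<open>0 \<le> \<alpha>\<close>] by (simp add: power2_eq_square algebra_simps)
  also have "\<dots> \<le> F x - \<alpha> * (\<eta> * (norm z)\<^sup>2) + (\<eta> - lam) * (\<alpha> * (norm z)\<^sup>2)"
    using assms(3-5) by (intro add_left_mono mult_right_mono) (auto simp: field_simps)
  finally show ?thesis
    by (simp add: algebra_simps)
qed

lemma shat_le:
  assumes "0 \<le> Lf" "0 \<le> Lg" "0 \<le> w" "0 \<le> eb" "lam \<le> \<eta>"
  shows "shat \<eta> lam Lf Lg w eb zn \<le> \<eta> - lam"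
proof -
  have "shat_rad \<eta> lam Lf Lg w eb zn \<le> (\<eta> - lam)\<^sup>2"
    using assms unfolding shat_rad_def by simp
  then show ?thesis
    unfolding shat_def using assms(5) real_sqrt_le_mono by fastforce
qed

lemma alpha_up_bounds:
  assumes "0 < Lf" "0 \<le> Lg" "0 \<le> w" "0 \<le> eb" "lam \<le> \<eta>"
    and "0 \<le> shat_rad \<eta> lam Lf Lg w eb zn"
  shows "(\<eta> - lam) / Lf \<le> alpha_up \<eta> lam Lf Lg w eb zn"
    and "alpha_up \<eta> lam Lf Lg w eb zn \<le> 2 * (\<eta> - lam) / Lf"
  using shat_le[of Lf Lg w eb lam \<eta> zn] assms
  by (auto simp: alpha_up_def shat_def divide_right_mono)

text \<open>
  An unreduced step \<open>\<beta>\<^sub>k = \<rho>'\<alpha>\<^sub>k\<^sub>-\<^sub>1\<close> does not decrease the step size; a backtracked one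
  exceeds \<open>\<rho> up\<^sub>k \<ge> \<rho> A\<close>.
\<close>
lemma backtracking_step_lower_bound:
  fixes \<alpha> \<beta> up :: "nat \<Rightarrow> real"
  assumes "0 \<le> \<rho>" "1 \<le> \<rho>'" "\<And>k. 0 \<le> \<alpha> k" "\<And>k. \<beta> (Suc k) = \<rho>' * \<alpha> k"
    and "\<And>k. A \<le> up k"
    and backtrack: "\<And>k. \<exists>i. \<alpha> k = \<rho> ^ i * \<beta> k \<and> (0 < i \<longrightarrow> \<rho> * up k < \<alpha> k)"
  shows "min (\<beta> 0) (\<rho> * A) \<le> \<alpha> k"
proof -
  have step_cases: "\<alpha> k = \<beta> k \<or> \<rho> * A \<le> \<alpha> k" for k
  proof -
    obtain i where "\<alpha> k = \<rho> ^ i * \<beta> k" "0 < i \<longrightarrow> \<rho> * up k < \<alpha> k"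
      using backtrack by blast
    moreover have "\<rho> * A \<le> \<rho> * up k"
      using assms(1,5) by (rule mult_left_mono[rotated])
    ultimately show ?thesis
      by (cases "i = 0") auto
  qed
  show ?thesis
  proof (induction k)
    case 0
    show ?case using step_cases[of 0] by auto
  next
    case (Suc k)
    have "\<alpha> k \<le> \<beta> (Suc k)"
      using assms(2-4) mult_right_mono[of 1 \<rho>' "\<alpha> k"] by simp
    then show ?case
      using Suc step_cases[of "Suc k"] by auto
  qed
qed

lemma sufficient_decrease_imp_tendsto_zero:
  fixes F a :: "nat \<Rightarrow> real"
  assumes "0 < c" "\<And>k. 0 \<le> a k" "\<And>k. F (Suc k) \<le> F k - c * a k" "\<And>k. B \<le> F k"
  shows "a \<longlonglongrightarrow> 0"
proof -
  have partial_sums: "(\<Sum>k<n. c * a k) \<le> F 0 - F n" for n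
  proof (induction n)
    case (Suc n)
    with assms(3)[of n] show ?case by simp
  qed simp
  have "(\<Sum>k\<le>n. c * a k) \<le> F 0 - B" for n
    using partial_sums[of "Suc n"] assms(4)[of "Suc n"] by (simp add: lessThan_Suc_atMost)
  then have "summable (\<lambda>k. c * a k)"
    using assms(1,2) by (intro bounded_imp_summable) auto
  then have "(\<lambda>k. c * a k) \<longlonglongrightarrow> 0"
    by (rule summable_LIMSEQ_zero)
  then have "(\<lambda>k. c * a k / c) \<longlonglongrightarrow> 0 / c"
    by (rule tendsto_divide) (use assms(1) in auto)
  then show ?thesis
    using assms(1) by simp
qed

lemma inexact_gradient_descent_tendsto_zero:
  fixes F :: "'a::real_inner \<Rightarrow> real" and \<theta> z :: "nat \<Rightarrow> 'a"
  assumes deriv: "\<And>p. (F has_derivative (\<lambda>u. G p \<bullet> u)) (at p)"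
    and Lipschitz: "\<And>a b. norm (G a - G b) \<le> L * norm (a - b)"
    and bounded: "bdd_below (range F)"
    and "0 < L" "0 < lam" "lam < \<eta>"
    and iteration: "\<And>k. \<theta> (Suc k) = \<theta> k - \<alpha> k *\<^sub>R z k"
    and direction: "\<And>k. norm (z k - G (\<theta> k)) \<le> (1 - \<eta>) * norm (z k)"
    and "0 < m" and step_lower: "\<And>k. m \<le> \<alpha> k"
    and step_upper: "\<And>k. \<alpha> k \<le> 2 * (\<eta> - lam) / L"
  shows "(\<lambda>k. norm (G (\<theta> k))) \<longlonglongrightarrow> 0"
proof -
  have decrease: "F (\<theta> (Suc k)) \<le> F (\<theta> k) - lam * m * (norm (z k))\<^sup>2" for k
  proof -
    have "0 \<le> \<alpha> k"
      using \<open>0 < m\<close> step_lower[of k] by linarith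
    then have "F (\<theta> (Suc k)) \<le> F (\<theta> k) - lam * \<alpha> k * (norm (z k))\<^sup>2"
      unfolding iteration
      by (rule gradient_step_sufficient_decrease[OF deriv Lipschitz \<open>0 < L\<close> _ step_upper
            relative_error_inner_lower_bound[OF direction]])
    also have "\<dots> \<le> F (\<theta> k) - lam * m * (norm (z k))\<^sup>2"
      using mult_right_mono[OF mult_left_mono[OF step_lower[of k]] zero_le_power2] \<open>0 < lam\<close>
      by simp
    finally show ?thesis .
  qed
  obtain B where "\<And>x. B \<le> F x"
    using bounded by (auto simp: bdd_below_def)
  moreover have "0 < lam * m"
    using \<open>0 < lam\<close> \<open>0 < m\<close> by simp
  ultimately have "(\<lambda>k. (norm (z k))\<^sup>2) \<longlonglongrightarrow> 0"
    using decrease by (intro sufficient_decrease_imp_tendsto_zero[where F = "\<lambda>k. F (\<theta> k)"]) auto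
  then have z_lim: "(\<lambda>k. 2 * norm (z k)) \<longlonglongrightarrow> 0"
    by (simp add: tendsto_mult_left_zero)
  have grad_bound: "norm (G (\<theta> k)) \<le> 2 * norm (z k)" for k
    using relative_error_norm_upper_bound[OF direction] \<open>0 < lam\<close> \<open>lam < \<eta>\<close> by simp
  show ?thesis
    by (rule tendsto_sandwich[OF _ _ tendsto_const z_lim])
      (simp_all add: grad_bound always_eventually)
qed

theorem corollary3p16:
  fixes g :: "real^'n \<Rightarrow> real"
    and h :: "real^'n \<Rightarrow> real^'d \<Rightarrow> real"
    and Gh :: "real^'n \<Rightarrow> real^'d \<Rightarrow> real^'n"
    and Hh :: "real^'n \<Rightarrow> real^'d \<Rightarrow> real^'n^'n"
    and Jh :: "real^'n \<Rightarrow> real^'d \<Rightarrow> real^'d^'n"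
    and \<mu> Lh :: "real^'d \<Rightarrow> real"
    and LH LJ Lf Lg :: real
    and gradf :: "real^'d \<Rightarrow> real^'d"
    and gradg :: "real^'n \<Rightarrow> real^'n"
    and \<beta>0 \<rho>l \<rho>h lam \<eta> :: real
    and \<theta> z :: "nat \<Rightarrow> real^'d"
    and \<epsilon> \<alpha> \<beta> :: "nat \<Rightarrow> real"
    and xt :: "nat \<Rightarrow> real^'n"
  assumes A1_grad: "\<And>x t. ((\<lambda>y. h y t) has_derivative (\<lambda>v. Gh x t \<bullet> v)) (at x)"
    and A1_hess: "\<And>x t. ((\<lambda>y. Gh y t) has_derivative (\<lambda>v. Hh x t *v v)) (at x)"
    and A1_mu: "\<And>t. 0 < \<mu> t \<and> \<mu> t \<le> Lh t"
    and A1_bounds: "\<And>x t v. \<mu> t * (v \<bullet> v) \<le> v \<bullet> (Hh x t *v v) \<and> v \<bullet> (Hh x t *v v) \<le> Lh t * (v \<bullet> v)"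
    and A1_cont_grad: "\<And>x. continuous_on UNIV (\<lambda>t. Gh x t)"
    and A1_cont_hess: "\<And>x. continuous_on UNIV (\<lambda>t. Hh x t)"
    and A2_hess_lip: "\<And>x y t. onorm (\<lambda>v. (Hh x t - Hh y t) *v v) \<le> LH * norm (x - y)"
    and A2_mixed: "\<And>x t. ((\<lambda>t'. Gh x t') has_derivative (\<lambda>u. Jh x t *v u)) (at t)"
    and A2_mixed_lip: "\<And>x y t. onorm (\<lambda>u. (Jh x t - Jh y t) *v u) \<le> LJ * norm (x - y)"
    and B_f: "\<And>t. ((\<lambda>t'. g (xhat h t')) has_derivative (\<lambda>u. gradf t \<bullet> u)) (at t)"
    and B_f_cont: "continuous_on UNIV gradf"
    and B_f_lip: "\<And>a b. norm (gradf a - gradf b) \<le> Lf * norm (a - b)"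
    and B_g: "\<And>x. (g has_derivative (\<lambda>v. gradg x \<bullet> v)) (at x)"
    and B_g_cont: "continuous_on UNIV gradg"
    and B_g_lip: "\<And>a b. norm (gradg a - gradg b) \<le> Lg * norm (a - b)"
    and B_pos: "Lf > 0" "Lg > 0"
    and B_bdd: "bdd_below (range g)"
    and par: "\<beta>0 > 0" "0 < \<rho>l" "\<rho>l < 1" "1 < \<rho>h" "0 < lam" "lam < \<eta>" "\<eta> < 1"
    and seq: "\<And>k. z k \<noteq> 0" "\<And>k. \<epsilon> k \<ge> 0"
      "\<And>k. norm (xt k - xhat h (\<theta> k)) \<le> \<epsilon> k"
      "\<And>k. \<alpha> k > 0" "\<And>k. \<beta> k > 0"
      "\<And>k. \<theta> (Suc k) = \<theta> k - \<alpha> k *\<^sub>R z k"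
      "\<And>k. norm (z k - gradf (\<theta> k)) \<le> (1 - \<eta>) * norm (z k)"
    and real_rad: "\<And>k. shat_rad \<eta> lam Lf Lg
        (norm (gradg (xt k)) + norm (gradg (xt (Suc k)))) (max (\<epsilon> k) (\<epsilon> (Suc k))) (norm (z k)) \<ge> 0"
    and step: "\<And>k. \<exists>i::nat.
        (let w = norm (gradg (xt k)) + norm (gradg (xt (Suc k)));
             eb = max (\<epsilon> k) (\<epsilon> (Suc k));
             lo = alpha_low \<eta> lam Lf Lg w eb (norm (z k));
             up = alpha_up \<eta> lam Lf Lg w eb (norm (z k))
         in \<alpha> k = \<rho>l ^ i * \<beta> k \<and> lo \<le> \<rho>l ^ i * \<beta> k \<and> \<rho>l ^ i * \<beta> k \<le> up
            \<and> (\<forall>j<i. \<not> (lo \<le> \<rho>l ^ j * \<beta> k \<and> \<rho>l ^ j * \<beta> k \<le> up))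
            \<and> (i > 0 \<longrightarrow> \<alpha> k > \<rho>l * up))"
    and beta0: "\<beta> 0 = \<beta>0"
    and beta_next: "\<And>k. \<beta> (Suc k) = \<rho>h * \<alpha> k"
  shows "(\<lambda>k. norm (gradf (\<theta> k))) \<longlonglongrightarrow> 0"
proof -
  define up where "up k = alpha_up \<eta> lam Lf Lg (norm (gradg (xt k)) + norm (gradg (xt (Suc k))))
    (max (\<epsilon> k) (\<epsilon> (Suc k))) (norm (z k))" for k
  have up_bounds: "(\<eta> - lam) / Lf \<le> up k" "up k \<le> 2 * (\<eta> - lam) / Lf" for k
    unfolding up_def using alpha_up_bounds[OF _ _ _ _ _ real_rad[of k]] B_pos par seq(2)[of k]
    by (auto simp: le_max_iff_disj)
  have backtrack: "\<exists>i. \<alpha> k = \<rho>l ^ i * \<beta> k \<and> \<alpha> k \<le> up k \<and> (0 < i \<longrightarrow> \<rho>l * up k < \<alpha> k)" for k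
    using step[of k] unfolding up_def Let_def by auto
  have step_lower: "min \<beta>0 (\<rho>l * ((\<eta> - lam) / Lf)) \<le> \<alpha> k" for k
    unfolding beta0[symmetric]
    by (rule backtracking_step_lower_bound[where \<alpha> = \<alpha> and \<beta> = \<beta> and up = up,
          OF less_imp_le[OF par(2)] less_imp_le[OF par(4)] less_imp_le[OF seq(4)] beta_next
          up_bounds(1)])
      (use backtrack in blast)
  have step_upper: "\<alpha> k \<le> 2 * (\<eta> - lam) / Lf" for k
    using backtrack[of k] up_bounds(2)[of k] by auto
  have f_bounded: "bdd_below (range (\<lambda>t. g (xhat h t)))"
    using B_bdd by (auto simp: bdd_below_def)
  have "0 < min \<beta>0 (\<rho>l * ((\<eta> - lam) / Lf))"
    using par B_pos by simp
  from inexact_gradient_descent_tendsto_zero[where \<theta> = \<theta> and z = z and \<alpha> = \<alpha>,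
      OF B_f B_f_lip f_bounded B_pos(1) par(5,6) seq(6,7)
      this step_lower step_upper]
  show ?thesis .
qed

end
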